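(* For every $n\ge 0$, the element $MC_n(\xi)=\sum_{|\alpha|=n}\mu(-(n+1);\overline\alpha)\,r_*[\mathbb{C}P^{n-|\alpha|'}]\,a^\alpha$ equals \[ \sum_{k=0}^n r_*[\mathbb{C}P^{n-k}]\cdot\Big(a_0^{2n+1}\big(\textstyle\sum_{i\ge0}a_iz^i\big)^{-(n+1)}\Big)[z^k], \] where $S(z)[z^k]$ denotes the coefficient of $z^k$ in the formal power series $S(z)$.
   Context: Here $a_0,a_1,\ldots$ are the elements of $BP^*\llbracket\xi\rrbracket$ defined by $\prod_{i=0}^{p-1}([i]\xi+_Fx)=\sum_{i\ge0}a_ix^{i+1}$ for the $BP$ formal group law $F$ (in particular $a_0=\chi=\prod_{i=1}^{p-1}[i]\xi$, which is not a zero divisor after reduction modulo $\langle p\rangle\xi$), $r_*[\mathbb{C}P^m]\in BP^{-2m}$ is the image of the class of $\mathbb{C}P^m$ under Quillen's map $r\colon MU_{(p)}\to BP$. Multi-indices $\alpha=(\alpha_0,\alpha_1,\ldots)$ of nonnegative integers, almost all zero; $\overline\alpha=(\alpha_1,\alpha_2,\ldots)$, $|\alpha|=\sum\alpha_i$, $|\alpha|'=\sum i\alpha_i$, $a^\alpha=\prod a_i^{\alpha_i}$. For an integer $m$, $\mu(m;\overline\alpha)$ is defined by $(1+b_1+b_2+\cdots)^m=\sum_{\overline\alpha}\mu(m;\overline\alpha)b_1^{\alpha_1}b_2^{\alpha_2}\cdots$. The coefficient of $z^k$ for $k\le n$ in $a_0^{2n+1}(\sum a_iz^i)^{-(n+1)}$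 is a polynomial in the $a_i$. *)

theory Defs
  imports "HOL-Computational_Algebra.Formal_Power_Series" "HOL-Computational_Algebra.Fraction_Field"
begin

text \<open>The generalized multinomial coefficient
  mu(m; beta), defined by (1 + b_1 + b_2 + ...)^m = sum mu(m;beta) b^beta, equals
  m (m-1) ... (m-|beta|+1) / prod_i beta_i!  (= (m gchoose |beta|) |beta|! / prod beta_i!)  (expand (1+B)^m binomially in
  B = b_1 + b_2 + ..., then B^k multinomially).\<close>
definition gen_multinom :: "int \<Rightarrow> (nat \<Rightarrow> nat) \<Rightarrow> int" where
  "gen_multinom m \<beta> = (let s = (\<Sum>i\<in>{i. \<beta> i \<noteq> 0}. \<beta> i) in
      (\<Prod>j<s. (m - int j)) div (\<Prod>i\<in>{i. \<beta> i \<noteq> 0}. int (fact (\<beta> i))))"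

text \<open>Multi-indices alpha with |alpha| = n and |alpha|' <= n (the terms with
  |alpha|' > n vanish since CP^m = 0 for m < 0); such alpha are supported in {0..n}.\<close>
definition multi_indices :: "nat \<Rightarrow> (nat \<Rightarrow> nat) set" where
  "multi_indices n = {\<alpha>. (\<forall>i>n. \<alpha> i = 0) \<and> (\<Sum>i\<le>n. \<alpha> i) = n \<and> (\<Sum>i\<le>n. i * \<alpha> i) \<le> n}"

text \<open>MC_n = sum_{|alpha|=n} mu(-(n+1); alpha-bar) c_{n-|alpha|'} a^alpha,
  where c m plays the role of r_*[CP^m].\<close>
definition MC :: "(nat \<Rightarrow> 'a::comm_ring_1) \<Rightarrow> (nat \<Rightarrow> 'a) \<Rightarrow> nat \<Rightarrow> 'a" where
  "MC a c n = (\<Sum>\<alpha>\<in>multi_indices n.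
      of_int (gen_multinom (- (int n + 1)) (\<lambda>i. \<alpha> (Suc i))) * c (n - (\<Sum>i\<le>n. i * \<alpha> i))
      * (\<Prod>i\<le>n. a i ^ \<alpha> i))"

definition frac_emb :: "'a::idom \<Rightarrow> 'a fract" where
  "frac_emb x = Fract x 1"

end

theory Submission
  imports Defs "HOL-Combinatorics.Multiset_Permutations"
begin

unbundle fps_syntax

text \<open>Write \<open>\<Sum> a_i z^i = a_0 (1 + B)\<close> with \<open>B = \<Sum>_{i \<ge> 1} (a_i / a_0) z^i\<close>, working in the
  field of fractions where \<open>a_0\<close> is invertible. The series in question is then
  \<open>a_0^n (1 + B)^-(n+1) = a_0^n \<Sum>_s (-1)^s C(n+s, s) B^s\<close>, and the coefficient of \<open>z^k\<close> in
  \<open>B^s\<close> is a sum over the compositions of \<open>k\<close> into \<open>s\<close> parts, i.e. over partitions weighted by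
  their number of orderings. A multi-index \<open>\<alpha>\<close> with \<open>|\<alpha>| = n\<close> and \<open>|\<alpha>|' = k\<close> is the same thing as
  a partition of \<open>k\<close> into \<open>s = \<alpha>_1 + \<alpha>_2 + \<dots>\<close> parts (\<open>\<alpha>_0 = n - s\<close> being forced), and
  \<open>\<mu>(-(n+1); \<alpha>_1, \<alpha>_2, \<dots>) = (-1)^s C(n+s, s) s! / \<Prod>_{i \<ge> 1} \<alpha>_i!\<close> is precisely that sign,
  binomial coefficient and number of orderings. Grouping \<open>MC_n\<close> by \<open>|\<alpha>|'\<close> gives the claim.\<close>

section \<open>Binomial series with negative exponent\<close>

lemma fps_inverse_one_plus_X_power:
  "inverse ((1 + fps_X :: 'a::field fps) ^ Suc n) = Abs_fps (\<lambda>s. (-1)^s * of_nat ((n + s) choose s))"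
proof (induction n)
  case 0
  then show ?case by (simp add: fps_inverse_fps_X_plus1)
next
  case (Suc n)
  show ?case
  proof (rule fps_ext)
    fix s
    have "inverse ((1 + fps_X :: 'a fps) ^ Suc (Suc n)) $ s
        = (\<Sum>i=0..s. (-1)^i * ((-1)^(s-i) * of_nat ((n + (s-i)) choose (s-i))))"
      by (simp only: power_Suc[of _ "Suc n"] fps_inverse_mult Suc.IH fps_inverse_fps_X_plus1
          fps_mult_nth) simp
    also have "\<dots> = (-1)^s * of_nat (\<Sum>i=0..s. (n + (s-i)) choose (s-i))"
      by (simp add: sum_distrib_left mult.assoc[symmetric] power_add[symmetric])
    also have "(\<Sum>i=0..s. (n + (s-i)) choose (s-i)) = (\<Sum>j\<le>s. (n+j) choose j)"
      using sum.atLeastAtMost_rev[of "\<lambda>j. (n+j) choose j" 0 s] by (simp add: atLeast0AtMost)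
    also have "\<dots> = Suc (n + s) choose s"
      by (rule sum_choose_lower)
    finally show "inverse ((1 + fps_X :: 'a fps) ^ Suc (Suc n)) $ s
        = Abs_fps (\<lambda>s. (-1)^s * of_nat ((Suc n + s) choose s)) $ s" by simp
  qed
qed

lemma fps_inverse_one_plus_power:
  fixes B :: "'a::field fps"
  assumes "B $ 0 = 0"
  shows "inverse ((1 + B) ^ Suc n) = Abs_fps (\<lambda>s. (-1)^s * of_nat ((n + s) choose s)) oo B"
proof -
  have "(1 + fps_X) ^ Suc n oo B = (1 + B) ^ Suc n"
  proof -
    have "(1 + fps_X) oo B = 1 + B"
      using assms by (simp add: fps_compose_add_distrib)
    then show ?thesis
      by (simp only: fps_compose_power[OF assms, symmetric])
  qed
  moreover have "inverse ((1 + fps_X) ^ Suc n) oo B = inverse ((1 + fps_X) ^ Suc n oo B)"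
    by (rule fps_inverse_compose[OF assms]) simp
  ultimately show ?thesis
    by (simp only: fps_inverse_one_plus_X_power)
qed

lemma fps_inverse_power_nth:
  fixes f :: "'a::field fps"
  assumes f0: "f $ 0 \<noteq> 0"
  defines "B \<equiv> Abs_fps (\<lambda>i. if i = 0 then 0 else f $ i / f $ 0)"
  shows "inverse (f ^ Suc n) $ k =
    inverse (f $ 0) ^ Suc n * (\<Sum>s=0..k. (-1)^s * of_nat ((n + s) choose s) * (B ^ s) $ k)"
proof -
  have "f = fps_const (f $ 0) * (1 + B)"
    by (rule fps_ext) (simp add: B_def f0)
  then have "inverse (f ^ Suc n) = fps_const (inverse (f $ 0) ^ Suc n) * inverse ((1 + B) ^ Suc n)"
    by (metis fps_inverse_mult fps_inverse_power fps_const_inverse fps_const_power power_mult_distrib)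
  also have "inverse ((1 + B) ^ Suc n) = Abs_fps (\<lambda>s. (-1)^s * of_nat ((n + s) choose s)) oo B"
    by (rule fps_inverse_one_plus_power) (simp add: B_def)
  finally show ?thesis
    by (simp add: fps_compose_nth)
qed

section \<open>Coefficients of powers of a series without constant term\<close>

definition compositions :: "nat \<Rightarrow> nat \<Rightarrow> nat list set" where
  "compositions s k = {xs. length xs = s \<and> (\<forall>x\<in>set xs. 0 < x) \<and> sum_list xs = k}"

definition mset_partitions :: "nat \<Rightarrow> nat \<Rightarrow> nat multiset set" where
  "mset_partitions s k = {M. size M = s \<and> (\<forall>x\<in>#M. 0 < x) \<and> sum_mset M = k}"

lemma finite_compositions: "finite (compositions s k)"
proof (rule finite_subset)
  show "compositions s k \<subseteq> {xs. set xs \<subseteq> {..k} \<and> length xs = s}"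
    unfolding compositions_def using member_le_sum_list by fastforce
qed (simp add: finite_lists_length_eq)

lemma compositions_0: "compositions 0 k = (if k = 0 then {[]} else {})"
  by (auto simp: compositions_def)

lemma compositions_Suc:
  "compositions (Suc s) k = (\<lambda>(i, xs). i # xs) ` (SIGMA i:{1..k}. compositions s (k - i))"
proof (rule set_eqI)
  fix ys
  show "ys \<in> compositions (Suc s) k \<longleftrightarrow> ys \<in> (\<lambda>(i, xs). i # xs) ` (SIGMA i:{1..k}. compositions s (k - i))"
  proof
    assume "ys \<in> compositions (Suc s) k"
    then obtain i xs where "ys = i # xs" and "(i, xs) \<in> (SIGMA i:{1..k}. compositions s (k - i))"
      unfolding compositions_def by (cases ys) auto
    then show "ys \<in> (\<lambda>(i, xs). i # xs) ` (SIGMA i:{1..k}. compositions s (k - i))" by force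
  qed (auto simp: compositions_def)
qed

lemma mset_partitions_eq_image: "mset_partitions s k = mset ` compositions s k"
proof -
  have mem: "xs \<in> compositions s k \<longleftrightarrow> mset xs \<in> mset_partitions s k" for xs
    by (auto simp: compositions_def mset_partitions_def sum_mset_sum_list)
  show ?thesis
  proof (rule set_eqI)
    fix M
    show "M \<in> mset_partitions s k \<longleftrightarrow> M \<in> mset ` compositions s k"
      using ex_mset[of M] mem by blast
  qed
qed

lemma finite_mset_partitions: "finite (mset_partitions s k)"
  by (simp add: mset_partitions_eq_image finite_compositions)

lemma fps_power_nth_compositions:
  fixes B :: "'a::comm_ring_1 fps"
  assumes "B $ 0 = 0"
  shows "(B ^ s) $ k = (\<Sum>xs\<in>compositions s k. \<Prod>i\<leftarrow>xs. B $ i)"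
proof (induction s arbitrary: k)
  case 0
  then show ?case by (simp add: compositions_0)
next
  case (Suc s)
  have "(B ^ Suc s) $ k = (\<Sum>i=0..k. B $ i * (B ^ s) $ (k - i))"
    by (simp add: fps_mult_nth)
  also have "\<dots> = (\<Sum>i\<in>{1..k}. B $ i * (B ^ s) $ (k - i))"
    by (rule sum.mono_neutral_right) (auto simp: assms not_less_eq_eq)
  also have "\<dots> = (\<Sum>i\<in>{1..k}. \<Sum>xs\<in>compositions s (k - i). \<Prod>j\<leftarrow>i # xs. B $ j)"
    by (simp add: Suc.IH sum_distrib_left)
  also have "\<dots> = (\<Sum>(i, xs)\<in>(SIGMA i:{1..k}. compositions s (k - i)). \<Prod>j\<leftarrow>i # xs. B $ j)"
    by (rule sum.Sigma) (simp_all add: finite_compositions)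
  also have "\<dots> = (\<Sum>xs\<in>compositions (Suc s) k. \<Prod>i\<leftarrow>xs. B $ i)"
    unfolding compositions_Suc by (subst sum.reindex) (auto simp: inj_on_def split_def)
  finally show ?case .
qed

text \<open>A multiset of parts arises from as many compositions as it has distinct orderings.\<close>
lemma fps_power_nth_mset_partitions:
  fixes B :: "'a::comm_ring_1 fps"
  assumes "B $ 0 = 0"
  shows "(B ^ s) $ k =
    (\<Sum>M\<in>mset_partitions s k. of_nat (card (permutations_of_multiset M)) * (\<Prod>i\<in>#M. B $ i))"
proof -
  have "(B ^ s) $ k =
      (\<Sum>M\<in>mset ` compositions s k. \<Sum>xs\<in>{xs \<in> compositions s k. mset xs = M}. \<Prod>i\<leftarrow>xs. B $ i)"
    unfolding fps_power_nth_compositions[OF assms] by (rule sum.image_gen[OF finite_compositions])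
  also have "\<dots> = (\<Sum>M\<in>mset_partitions s k. \<Sum>xs\<in>permutations_of_multiset M. \<Prod>i\<in>#M. B $ i)"
  proof (rule sum.cong)
    fix M assume M: "M \<in> mset_partitions s k"
    then have "{xs \<in> compositions s k. mset xs = M} = permutations_of_multiset M"
      by (auto simp: permutations_of_multiset_def mset_partitions_def compositions_def sum_mset_sum_list)
    then show "(\<Sum>xs\<in>{xs \<in> compositions s k. mset xs = M}. \<Prod>i\<leftarrow>xs. B $ i) =
        (\<Sum>xs\<in>permutations_of_multiset M. \<Prod>i\<in>#M. B $ i)"
      by (auto simp: permutations_of_multiset_def prod_mset_prod_list[symmetric] intro: sum.cong)
  qed (simp add: mset_partitions_eq_image)
  finally show ?thesis by simp
qed

section \<open>Multi-indices as partitions\<close>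

definition parts_mset :: "nat \<Rightarrow> (nat \<Rightarrow> nat) \<Rightarrow> nat multiset" where
  "parts_mset n \<alpha> = (\<Sum>i<n. replicate_mset (\<alpha> (Suc i)) (Suc i))"

lemma parts_mset_0 [simp]: "parts_mset 0 \<alpha> = {#}"
  by (simp add: parts_mset_def)

lemma parts_mset_Suc [simp]:
  "parts_mset (Suc n) \<alpha> = parts_mset n \<alpha> + replicate_mset (\<alpha> (Suc n)) (Suc n)"
  by (simp add: parts_mset_def)

lemma count_parts_mset: "count (parts_mset n \<alpha>) x = (if 0 < x \<and> x \<le> n then \<alpha> x else 0)"
  by (induction n) auto

lemma set_parts_mset: "set_mset (parts_mset n \<alpha>) \<subseteq> {1..n}"
  by (auto simp: count_parts_mset Suc_le_eq simp flip: count_greater_zero_iff split: if_splits)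

lemma size_parts_mset: "size (parts_mset n \<alpha>) = (\<Sum>i<n. \<alpha> (Suc i))"
  by (induction n) simp_all

lemma sum_mset_parts_mset: "sum_mset (parts_mset n \<alpha>) = (\<Sum>i\<le>n. i * \<alpha> i)"
  by (induction n) simp_all

lemma prod_mset_image_parts_mset:
  "(\<Prod>x\<in>#parts_mset n \<alpha>. f x) = (\<Prod>i<n. f (Suc i) ^ \<alpha> (Suc i))"
  by (induction n) simp_all

lemma parts_mset_count:
  assumes "set_mset M \<subseteq> {1..n}"
  shows "parts_mset n (count M) = M"
proof (rule multiset_eqI)
  fix x
  show "count (parts_mset n (count M)) x = count M x"
    using assms by (auto simp: count_parts_mset count_eq_zero_iff)
qed

lemma finite_multi_indices: "finite (multi_indices n)"
proof (rule finite_subset)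
  show "multi_indices n \<subseteq> {\<alpha>. \<forall>i. (i \<in> {..n} \<longrightarrow> \<alpha> i \<in> {..n}) \<and> (i \<notin> {..n} \<longrightarrow> \<alpha> i = 0)}"
  proof (clarsimp simp: multi_indices_def)
    fix \<alpha> :: "nat \<Rightarrow> nat" and i assume "sum \<alpha> {..n} = n" "i \<le> n"
    then show "\<alpha> i \<le> n"
      using member_le_sum[of i "{..n}" \<alpha>] by simp
  qed
qed (rule finite_set_of_finite_funs; simp)

lemma multi_indices_size_parts_mset:
  assumes "\<alpha> \<in> multi_indices n"
  shows "\<alpha> 0 + size (parts_mset n \<alpha>) = n"
  using assms by (simp add: multi_indices_def size_parts_mset sum.atMost_shift)

lemma size_parts_mset_le_sum_mset: "size (parts_mset n \<alpha>) \<le> sum_mset (parts_mset n \<alpha>)"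
  unfolding size_parts_mset sum_mset_parts_mset sum.atMost_shift by (simp add: sum_mono)

section \<open>The generalized multinomial coefficient with negative exponent\<close>

lemma prod_neg_rising_int:
  "(\<Prod>j<s. - (int m + 1) - int j) = (-1)^s * int ((m + s) choose s) * int (fact s)"
proof -
  have rising: "(\<Prod>j<s. m + 1 + j) = ((m + s) choose s) * fact s"
  proof (induction s)
    case (Suc s)
    have "(\<Prod>j<Suc s. m + 1 + j) = ((m + s) choose s) * fact s * (m + 1 + s)"
      by (simp only: prod.lessThan_Suc Suc.IH)
    also have "\<dots> = (Suc (m + s) * ((m + s) choose s)) * fact s"
      by (simp add: algebra_simps)
    also have "Suc (m + s) * ((m + s) choose s) = Suc s * (Suc (m + s) choose Suc s)"
      by (simp only: Suc_times_binomial_eq mult.commute)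
    finally show ?case by (simp add: algebra_simps)
  qed simp
  have "(\<Prod>j<s. - (int m + 1) - int j) = (-1)^s * int (\<Prod>j<s. m + 1 + j)"
    by (induction s) (simp_all add: algebra_simps)
  then show ?thesis
    by (simp only: rising of_nat_mult mult.assoc)
qed

lemma gen_multinom_neg_parts_mset:
  assumes "\<forall>i>n. \<alpha> i = 0"
  defines "M \<equiv> parts_mset n \<alpha>"
  shows "gen_multinom (- (int m + 1)) (\<lambda>i. \<alpha> (Suc i)) =
    (-1) ^ size M * int ((m + size M) choose size M) * int (card (permutations_of_multiset M))"
proof -
  define S where "S = {i. \<alpha> (Suc i) \<noteq> 0}"
  have S: "S \<subseteq> {..<n}"
  proof
    fix i assume "i \<in> S"
    then have "\<not> n < Suc i"
      using assms(1) by (auto simp: S_def)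
    then show "i \<in> {..<n}" by simp
  qed
  have sum_S: "(\<Sum>i\<in>S. \<alpha> (Suc i)) = size M"
    unfolding M_def size_parts_mset by (rule sum.mono_neutral_left[OF _ S]) (auto simp: S_def)
  have "(\<Prod>x\<in>set_mset M. fact (count M x)) = (\<Prod>x\<in>{1..n}. fact (count M x) :: nat)"
    unfolding M_def by (rule prod.mono_neutral_left[OF _ set_parts_mset]) (auto simp: not_in_iff)
  also have "\<dots> = (\<Prod>i<n. fact (\<alpha> (Suc i)))"
    unfolding One_nat_def prod.atLeast1_atMost_eq M_def by (simp add: count_parts_mset)
  also have "\<dots> = (\<Prod>i\<in>S. fact (\<alpha> (Suc i)))"
    by (rule prod.mono_neutral_right[OF _ S]) (auto simp: S_def)
  finally have fact_size: "fact (size M) = card (permutations_of_multiset M) * (\<Prod>i\<in>S. fact (\<alpha> (Suc i)))"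
    by (metis card_permutations_of_multiset_aux)
  then have "(\<Prod>j<size M. - (int m + 1) - int j) =
      (-1) ^ size M * int ((m + size M) choose size M) * int (card (permutations_of_multiset M))
      * (\<Prod>i\<in>S. int (fact (\<alpha> (Suc i))))"
    unfolding prod_neg_rising_int fact_size by (simp add: of_nat_prod mult.assoc)
  moreover have "(\<Prod>i\<in>S. int (fact (\<alpha> (Suc i)))) \<noteq> 0"
    using finite_subset[OF S] by (simp add: prod_zero_iff)
  ultimately show ?thesis
    unfolding gen_multinom_def Let_def S_def[symmetric] sum_S by simp
qed

lemma prod_power_eq_prod_mset_parts_mset:
  fixes b :: "nat \<Rightarrow> 'a::field"
  assumes "b 0 \<noteq> 0" and "\<alpha> 0 + size (parts_mset n \<alpha>) = n"
  shows "(\<Prod>i\<le>n. b i ^ \<alpha> i) = b 0 ^ n * (\<Prod>x\<in>#parts_mset n \<alpha>. b x / b 0)"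
proof -
  have "(\<Prod>x\<in>#parts_mset n \<alpha>. b x / b 0) = (\<Prod>i<n. b (Suc i) ^ \<alpha> (Suc i)) / b 0 ^ size (parts_mset n \<alpha>)"
    by (simp add: prod_mset_image_parts_mset size_parts_mset power_divide prod_dividef power_sum)
  moreover have "b 0 ^ n = b 0 ^ \<alpha> 0 * b 0 ^ size (parts_mset n \<alpha>)"
    using assms(2) by (metis power_add)
  ultimately show ?thesis
    using assms(1) by (simp add: prod.atMost_shift)
qed

lemma mset_partitions_set_mset_subset:
  assumes "M \<in> mset_partitions s k"
  shows "set_mset M \<subseteq> {1..k}"
proof
  fix x assume "x \<in># M"
  then show "x \<in> {1..k}"
    using assms sum_mset.remove[of x M] by (auto simp: mset_partitions_def Suc_le_eq)
qed

lemma bij_betw_parts_mset: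
  assumes "k \<le> n"
  shows "bij_betw (\<lambda>\<alpha>. (size (parts_mset n \<alpha>), parts_mset n \<alpha>))
    {\<alpha> \<in> multi_indices n. (\<Sum>i\<le>n. i * \<alpha> i) = k} (SIGMA s:{0..k}. mset_partitions s k)"
    (is "bij_betw ?f ?A ?B")
proof (rule bij_betw_byWitness[where f' = "\<lambda>(s, M) i. if i = 0 then n - s else count M i"])
  have parts: "parts_mset n (\<lambda>i. if i = 0 then j else count M i) = M"
    if "M \<in> mset_partitions s k" for j s M
  proof -
    have "parts_mset n (\<lambda>i. if i = 0 then j else count M i) = parts_mset n (count M)"
      by (rule multiset_eqI) (simp add: count_parts_mset)
    also have "\<dots> = M"
      using mset_partitions_set_mset_subset[OF that] assms by (intro parts_mset_count) auto
    finally show ?thesis .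
  qed
  show "\<forall>\<alpha>\<in>?A. (\<lambda>(s, M) i. if i = 0 then n - s else count M i) (?f \<alpha>) = \<alpha>"
  proof (clarify, rule ext)
    fix \<alpha> i assume "\<alpha> \<in> multi_indices n"
    then show "(if i = 0 then n - size (parts_mset n \<alpha>) else count (parts_mset n \<alpha>) i) = \<alpha> i"
      using multi_indices_size_parts_mset[of \<alpha> n]
      by (auto simp: count_parts_mset multi_indices_def)
  qed
  show "\<forall>p\<in>?B. ?f ((\<lambda>(s, M) i. if i = 0 then n - s else count M i) p) = p"
    using parts by (auto simp: mset_partitions_def)
  show "?f ` ?A \<subseteq> ?B"
    using size_parts_mset_le_sum_mset set_parts_mset
    by (fastforce simp: mset_partitions_def sum_mset_parts_mset)
  show "(\<lambda>(s, M) i. if i = 0 then n - s else count M i) ` ?B \<subseteq> ?A"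
  proof clarify
    fix s M assume s: "s \<in> {0..k}" and M: "M \<in> mset_partitions s k"
    define \<alpha> where "\<alpha> = (\<lambda>i. if i = 0 then n - s else count M i)"
    have "parts_mset n \<alpha> = M"
      unfolding \<alpha>_def using M by (rule parts)
    moreover have "\<forall>i>n. \<alpha> i = 0"
      using mset_partitions_set_mset_subset[OF M] assms by (auto simp: \<alpha>_def count_eq_zero_iff)
    ultimately show "\<alpha> \<in> multi_indices n \<and> (\<Sum>i\<le>n. i * \<alpha> i) = k"
      using M s assms size_parts_mset[of n \<alpha>] sum_mset_parts_mset[of n \<alpha>]
      by (auto simp: multi_indices_def mset_partitions_def sum.atMost_shift \<alpha>_def)
  qed
qed

lemma normalized_inverse_power_nth_mset_partitions:
  fixes b :: "nat \<Rightarrow> 'a::field"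
  assumes b0: "b 0 \<noteq> 0"
  shows "(fps_const (b 0) ^ (2 * n + 1) * inverse (Abs_fps b ^ (n + 1))) $ k =
    (\<Sum>s=0..k. \<Sum>M\<in>mset_partitions s k. b 0 ^ n * ((-1)^s * of_nat ((n + s) choose s)
      * (of_nat (card (permutations_of_multiset M)) * (\<Prod>x\<in>#M. b x / b 0))))"
proof -
  define B where "B = Abs_fps (\<lambda>i. if i = 0 then 0 else Abs_fps b $ i / Abs_fps b $ 0)"
  have split: "b 0 ^ (2 * n + 1) = b 0 ^ n * b 0 ^ Suc n"
    by (simp add: mult_2 flip: power_add)
  have cancel: "b 0 ^ Suc n * inverse (b 0) ^ Suc n = 1"
    by (simp only: power_mult_distrib[symmetric] right_inverse[OF b0] power_one)
  have "b 0 ^ (2 * n + 1) * inverse (b 0) ^ Suc n = b 0 ^ n"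
    unfolding split mult.assoc cancel by simp
  then have "(fps_const (b 0) ^ (2 * n + 1) * inverse (Abs_fps b ^ (n + 1))) $ k =
      b 0 ^ n * (\<Sum>s=0..k. (-1)^s * of_nat ((n + s) choose s) * (B ^ s) $ k)"
    using fps_inverse_power_nth[of "Abs_fps b" n k] b0 by (simp add: B_def fps_const_power mult.assoc)
  moreover have "(\<Prod>x\<in>#M. B $ x) = (\<Prod>x\<in>#M. b x / b 0)" if "M \<in> mset_partitions s k" for s M
    using that by (intro arg_cong[where f = prod_mset] image_mset_cong) (auto simp: B_def mset_partitions_def)
  ultimately show ?thesis
    by (simp add: fps_power_nth_mset_partitions B_def sum_distrib_left)
qed

lemma normalized_inverse_power_nth:
  fixes b :: "nat \<Rightarrow> 'a::field"
  assumes b0: "b 0 \<noteq> 0" and "k \<le> n"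
  shows "(fps_const (b 0) ^ (2 * n + 1) * inverse (Abs_fps b ^ (n + 1))) $ k =
    (\<Sum>\<alpha> | \<alpha> \<in> multi_indices n \<and> (\<Sum>i\<le>n. i * \<alpha> i) = k.
      of_int (gen_multinom (- (int n + 1)) (\<lambda>i. \<alpha> (Suc i))) * (\<Prod>i\<le>n. b i ^ \<alpha> i))"
proof -
  define g where "g = (\<lambda>(s, M). b 0 ^ n * ((-1)^s * of_nat ((n + s) choose s)
      * (of_nat (card (permutations_of_multiset M)) * (\<Prod>x\<in>#M. b x / b 0))))"
  have "(fps_const (b 0) ^ (2 * n + 1) * inverse (Abs_fps b ^ (n + 1))) $ k =
      (\<Sum>s=0..k. \<Sum>M\<in>mset_partitions s k. g (s, M))"
    unfolding normalized_inverse_power_nth_mset_partitions[of b, OF b0] g_def by simp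
  also have "\<dots> = (\<Sum>p\<in>(SIGMA s:{0..k}. mset_partitions s k). g p)"
    by (simp add: sum.Sigma finite_mset_partitions)
  also have "\<dots> = (\<Sum>\<alpha> | \<alpha> \<in> multi_indices n \<and> (\<Sum>i\<le>n. i * \<alpha> i) = k.
      g (size (parts_mset n \<alpha>), parts_mset n \<alpha>))"
    by (rule sum.reindex_bij_betw[OF bij_betw_parts_mset[OF assms(2)], symmetric])
  also have "\<dots> = (\<Sum>\<alpha> | \<alpha> \<in> multi_indices n \<and> (\<Sum>i\<le>n. i * \<alpha> i) = k.
      of_int (gen_multinom (- (int n + 1)) (\<lambda>i. \<alpha> (Suc i))) * (\<Prod>i\<le>n. b i ^ \<alpha> i))"
  proof (rule sum.cong)
    fix \<alpha> assume "\<alpha> \<in> {\<alpha>. \<alpha> \<in> multi_indices n \<and> (\<Sum>i\<le>n. i * \<alpha> i) = k}"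
    then have MI: "\<alpha> \<in> multi_indices n" by simp
    have gm: "gen_multinom (- (int n + 1)) (\<lambda>i. \<alpha> (Suc i)) =
        (-1) ^ size (parts_mset n \<alpha>) * int ((n + size (parts_mset n \<alpha>)) choose size (parts_mset n \<alpha>))
        * int (card (permutations_of_multiset (parts_mset n \<alpha>)))"
      using MI by (intro gen_multinom_neg_parts_mset) (simp add: multi_indices_def)
    show "g (size (parts_mset n \<alpha>), parts_mset n \<alpha>) =
        of_int (gen_multinom (- (int n + 1)) (\<lambda>i. \<alpha> (Suc i))) * (\<Prod>i\<le>n. b i ^ \<alpha> i)"
      unfolding gm prod_power_eq_prod_mset_parts_mset[of b, OF b0 multi_indices_size_parts_mset[OF MI]]
      by (simp add: g_def ac_simps)
  qed simp
  finally show ?thesis .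
qed

theorem MC_eq_sum_nth_normalized_inverse_power:
  fixes b d :: "nat \<Rightarrow> 'a::field"
  assumes "b 0 \<noteq> 0"
  shows "MC b d n =
    (\<Sum>k=0..n. d (n - k) * (fps_const (b 0) ^ (2 * n + 1) * inverse (Abs_fps b ^ (n + 1))) $ k)"
proof -
  have "MC b d n = (\<Sum>k=0..n. \<Sum>\<alpha> | \<alpha> \<in> multi_indices n \<and> (\<Sum>i\<le>n. i * \<alpha> i) = k.
      of_int (gen_multinom (- (int n + 1)) (\<lambda>i. \<alpha> (Suc i))) * d (n - (\<Sum>i\<le>n. i * \<alpha> i))
      * (\<Prod>i\<le>n. b i ^ \<alpha> i))"
    unfolding MC_def
    by (rule sum.group[symmetric, OF finite_multi_indices]) (auto simp: multi_indices_def)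
  also have "\<dots> = (\<Sum>k=0..n. d (n - k) * (fps_const (b 0) ^ (2 * n + 1) * inverse (Abs_fps b ^ (n + 1))) $ k)"
  proof (rule sum.cong[OF refl])
    fix k assume "k \<in> {0..n}"
    then have k: "k \<le> n" by simp
    show "(\<Sum>\<alpha> | \<alpha> \<in> multi_indices n \<and> (\<Sum>i\<le>n. i * \<alpha> i) = k.
        of_int (gen_multinom (- (int n + 1)) (\<lambda>i. \<alpha> (Suc i))) * d (n - (\<Sum>i\<le>n. i * \<alpha> i))
        * (\<Prod>i\<le>n. b i ^ \<alpha> i)) =
      d (n - k) * (fps_const (b 0) ^ (2 * n + 1) * inverse (Abs_fps b ^ (n + 1))) $ k"
      unfolding normalized_inverse_power_nth[of b k n, OF assms k] sum_distrib_left
      by (intro sum.cong) (auto simp: ac_simps)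
  qed
  finally show ?thesis .
qed

section \<open>Passing to the field of fractions\<close>

lemma frac_emb_0: "frac_emb 0 = 0"
  by (simp add: frac_emb_def Zero_fract_def)

lemma frac_emb_1: "frac_emb 1 = 1"
  by (simp add: frac_emb_def One_fract_def)

lemma frac_emb_add: "frac_emb (x + y) = frac_emb x + frac_emb y"
  by (simp add: frac_emb_def)

lemma frac_emb_mult: "frac_emb (x * y) = frac_emb x * frac_emb y"
  by (simp add: frac_emb_def)

lemma frac_emb_uminus: "frac_emb (- x) = - frac_emb x"
  by (simp add: frac_emb_def)

lemma frac_emb_eq_0_iff: "frac_emb x = 0 \<longleftrightarrow> x = 0"
  by (simp add: frac_emb_def Zero_fract_def eq_fract)

lemma frac_emb_of_nat: "frac_emb (of_nat m) = of_nat m"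
  by (simp add: frac_emb_def Fract_of_nat_eq)

lemma frac_emb_of_int: "frac_emb (of_int z) = of_int z"
  by (cases z rule: int_cases)
    (simp_all only: of_int_minus frac_emb_uminus of_int_of_nat_eq frac_emb_of_nat)

lemma frac_emb_power: "frac_emb (x ^ m) = frac_emb x ^ m"
  by (induction m) (simp_all add: frac_emb_1 frac_emb_mult)

lemma frac_emb_sum: "frac_emb (sum f A) = (\<Sum>x\<in>A. frac_emb (f x))"
  by (induction A rule: infinite_finite_induct) (simp_all add: frac_emb_0 frac_emb_add)

lemma frac_emb_prod: "frac_emb (prod f A) = (\<Prod>x\<in>A. frac_emb (f x))"
  by (induction A rule: infinite_finite_induct) (simp_all add: frac_emb_1 frac_emb_mult)

lemma frac_emb_MC: "frac_emb (MC a c n) = MC (\<lambda>i. frac_emb (a i)) (\<lambda>i. frac_emb (c i)) n"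
  unfolding MC_def
  by (simp only: frac_emb_sum frac_emb_mult frac_emb_prod frac_emb_power frac_emb_of_int)

theorem proposition5p7:
  fixes a c :: "nat \<Rightarrow> 'a::idom" and n :: nat
  assumes "a 0 \<noteq> 0"
  shows "frac_emb (MC a c n) =
    (\<Sum>k=0..n. frac_emb (c (n - k)) *
       fps_nth (fps_const (frac_emb (a 0)) ^ (2 * n + 1)
                * inverse (Abs_fps (\<lambda>i. frac_emb (a i)) ^ (n + 1))) k)"
proof -
  have "frac_emb (a 0) \<noteq> 0"
    using assms by (simp add: frac_emb_eq_0_iff)
  then show ?thesis
    unfolding frac_emb_MC by (rule MC_eq_sum_nth_normalized_inverse_power)
qed

end
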